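(* Let $\mathbf{A}'$ be an $n\times d$ matrix, $k\ge 1$, $\varepsilon\in(0,1)$, and suppose the maximum coverage optimum $\mathbf{OPT}$ of $\mathbf{A}'$ with $k$ subsets satisfies $\mathbf{OPT}\le C_1\, k\log d/\varepsilon^2$ for a constant $C_1$. Then the number of large items in $\mathbf{A}'$ is $O(k\log d/\varepsilon^2)$.
   Context: Item $i$ belongs to subset (column) $j$ iff $A'_{ij}\neq 0$. $\mathbf{OPT}$ is the maximum over sets of $k$ columns of the number of rows having a nonzero entry in at least one of those columns. An item (row) is large if it has at least $d/k$ nonzero entries. The implied constant in $O(\cdot)$ depends only on $C_1$. *)

theory Defs
  imports Complex_Main
begin

text \<open>An n x d matrix is a function A :: nat => nat => real, with rows i < n and
columns j < d.  Item (row) i belongs to subset (column) j iff A i j ~= 0.\<close>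

definition coverage :: "(nat \<Rightarrow> nat \<Rightarrow> real) \<Rightarrow> nat \<Rightarrow> nat set \<Rightarrow> nat" where
  "coverage A n S = card {i. i < n \<and> (\<exists>j\<in>S. A i j \<noteq> 0)}"

definition max_cov_opt :: "(nat \<Rightarrow> nat \<Rightarrow> real) \<Rightarrow> nat \<Rightarrow> nat \<Rightarrow> nat \<Rightarrow> nat" where
  "max_cov_opt A n d k = Max {coverage A n S | S. S \<subseteq> {..<d} \<and> card S \<le> k}"

definition row_nnz :: "(nat \<Rightarrow> nat \<Rightarrow> real) \<Rightarrow> nat \<Rightarrow> nat \<Rightarrow> nat" where
  "row_nnz A d i = card {j. j < d \<and> A i j \<noteq> 0}"

definition large_items :: "(nat \<Rightarrow> nat \<Rightarrow> real) \<Rightarrow> nat \<Rightarrow> nat \<Rightarrow> nat \<Rightarrow> nat set" where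
  "large_items A n d k = {i. i < n \<and> real (row_nnz A d i) \<ge> real d / real k}"

end

theory Submission
  imports Defs
begin

text \<open>Large items can be covered greedily: by double counting, some column meets at least a
\<open>1/k\<close> fraction of any set of large items, so \<open>k\<close> greedy choices leave at most
\<open>(1 - 1/k)^k \<le> 1/e \<le> 1/2\<close> of them uncovered. Hence the number of large items is at most
\<open>2 OPT\<close>, and the hypothesis on \<open>OPT\<close> gives the bound with constant \<open>2 C\<^sub>1\<close>.\<close>

definition uncovered :: "(nat \<Rightarrow> nat \<Rightarrow> real) \<Rightarrow> nat set \<Rightarrow> nat set \<Rightarrow> nat set" where
  "uncovered A W S = {i \<in> W. \<forall>j\<in>S. A i j = 0}"

lemma sum_card_column_eq_sum_row_nnz:
  assumes "finite W"
  shows "(\<Sum>j<d. real (card {i\<in>W. A i j \<noteq> 0})) = (\<Sum>i\<in>W. real (row_nnz A d i))"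
proof -
  have "(\<Sum>j<d. real (card {i\<in>W. A i j \<noteq> 0}))
      = (\<Sum>j<d. \<Sum>i\<in>W. if A i j \<noteq> 0 then 1 else (0::real))"
    using assms by (simp add: sum.inter_filter[symmetric])
  also have "\<dots> = (\<Sum>i\<in>W. \<Sum>j<d. if A i j \<noteq> 0 then 1 else (0::real))"
    by (rule sum.swap)
  also have "\<dots> = (\<Sum>i\<in>W. real (row_nnz A d i))"
  proof (rule sum.cong[OF refl])
    fix i
    have "{j. j < d \<and> A i j \<noteq> 0} = {j\<in>{..<d}. A i j \<noteq> 0}" by auto
    then show "(\<Sum>j<d. if A i j \<noteq> 0 then 1 else (0::real)) = real (row_nnz A d i)"
      unfolding row_nnz_def by (simp add: sum.inter_filter[symmetric])
  qed
  finally show ?thesis .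
qed

lemma exists_column_meeting_fraction:
  assumes "finite W" "d \<ge> 1" "\<And>i. i \<in> W \<Longrightarrow> real (row_nnz A d i) \<ge> real d / real k"
  shows "\<exists>j<d. real (card {i\<in>W. A i j \<noteq> 0}) \<ge> real (card W) / real k"
proof (rule ccontr)
  assume "\<not> ?thesis"
  then have "\<And>j. j \<in> {..<d} \<Longrightarrow> real (card {i\<in>W. A i j \<noteq> 0}) < real (card W) / real k"
    by auto
  then have "(\<Sum>j<d. real (card {i\<in>W. A i j \<noteq> 0})) < real (card {..<d}) * (real (card W) / real k)"
    by (rule sum_bounded_above_strict) (use assms(2) in auto)
  also have "\<dots> = (\<Sum>i\<in>W. real d / real k)" by simp
  also have "\<dots> \<le> (\<Sum>i\<in>W. real (row_nnz A d i))" by (rule sum_mono) (use assms(3) in auto)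
  finally show False using sum_card_column_eq_sum_row_nnz[OF assms(1)] by simp
qed

lemma exists_columns_card_uncovered_le:
  assumes "finite W" "d \<ge> 1" "\<And>i. i \<in> W \<Longrightarrow> real (row_nnz A d i) \<ge> real d / real k"
  shows "\<exists>S\<subseteq>{..<d}. card S \<le> t \<and>
           real (card (uncovered A W S)) \<le> real (card W) * (1 - 1 / real k) ^ t"
proof (induction t)
  case 0
  have "uncovered A W {} = W" by (simp add: uncovered_def)
  then show ?case by (intro exI[of _ "{}"]) auto
next
  case (Suc t)
  then obtain S where S: "S \<subseteq> {..<d}" "card S \<le> t"
    and IH: "real (card (uncovered A W S)) \<le> real (card W) * (1 - 1 / real k) ^ t"
    by auto
  define U where "U = uncovered A W S"
  have "finite U" "U \<subseteq> W"
    using assms(1) by (auto simp: U_def uncovered_def)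
  have "\<exists>j<d. real (card {i\<in>U. A i j \<noteq> 0}) \<ge> real (card U) / real k"
    by (rule exists_column_meeting_fraction[OF \<open>finite U\<close> assms(2)])
      (use assms(3) \<open>U \<subseteq> W\<close> in blast)
  then obtain j where "j < d" and j: "real (card {i\<in>U. A i j \<noteq> 0}) \<ge> real (card U) / real k"
    by blast
  have "uncovered A W (insert j S) = U - {i\<in>U. A i j \<noteq> 0}"
    by (auto simp: U_def uncovered_def)
  then have "real (card (uncovered A W (insert j S)))
      = real (card U) - real (card {i\<in>U. A i j \<noteq> 0})"
    using \<open>finite U\<close> by (simp add: card_Diff_subset card_mono of_nat_diff)
  also have "\<dots> \<le> real (card U) * (1 - 1 / real k)"
    using j by (simp add: algebra_simps)
  also have "\<dots> \<le> real (card W) * (1 - 1 / real k) ^ t * (1 - 1 / real k)"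
    by (rule mult_right_mono[OF IH[folded U_def]]) (auto simp: divide_le_eq_1)
  finally have "real (card (uncovered A W (insert j S))) \<le> real (card W) * (1 - 1 / real k) ^ Suc t"
    by (simp only: power_Suc2 mult.assoc)
  moreover have "card (insert j S) \<le> Suc t"
    using S finite_subset[OF S(1)] by (simp add: card_insert_if)
  moreover have "insert j S \<subseteq> {..<d}"
    using S(1) \<open>j < d\<close> by simp
  ultimately show ?case
    by blast
qed

lemma one_minus_inverse_power_le_half:
  assumes "k \<ge> 1"
  shows "(1 - 1 / real k) ^ k \<le> 1 / 2"
proof -
  have "(1 - 1 / real k) ^ k \<le> exp (- (1 / real k)) ^ k"
    using exp_ge_add_one_self[of "- (1 / real k)"] assms by (intro power_mono) auto
  also have "\<dots> = exp (-1)"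
    using assms by (simp add: exp_of_nat_mult[symmetric])
  also have "\<dots> \<le> 1 / 2"
    using exp_ge_add_one_self[of 1] by (simp add: exp_minus field_simps)
  finally show ?thesis .
qed

lemma coverage_le_max_cov_opt:
  assumes "S \<subseteq> {..<d}" "card S \<le> k"
  shows "coverage A n S \<le> max_cov_opt A n d k"
  unfolding max_cov_opt_def
proof (rule Max_ge)
  show "finite {coverage A n S |S. S \<subseteq> {..<d} \<and> card S \<le> k}"
    by (rule finite_subset[of _ "(\<lambda>S. coverage A n S) ` Pow {..<d}"]) auto
  show "coverage A n S \<in> {coverage A n S |S. S \<subseteq> {..<d} \<and> card S \<le> k}"
    using assms by auto
qed

lemma card_le_uncovered_plus_coverage:
  assumes "W \<subseteq> {..<n}"
  shows "card W \<le> card (uncovered A W S) + coverage A n S"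
proof -
  have "W \<subseteq> uncovered A W S \<union> {i. i < n \<and> (\<exists>j\<in>S. A i j \<noteq> 0)}"
    using assms by (auto simp: uncovered_def)
  moreover have "finite (uncovered A W S \<union> {i. i < n \<and> (\<exists>j\<in>S. A i j \<noteq> 0)})"
    by (rule finite_subset[of _ "{..<n}"]) (use assms in \<open>auto simp: uncovered_def\<close>)
  ultimately have "card W \<le> card (uncovered A W S \<union> {i. i < n \<and> (\<exists>j\<in>S. A i j \<noteq> 0)})"
    by (simp add: card_mono)
  also have "\<dots> \<le> card (uncovered A W S) + coverage A n S"
    unfolding coverage_def by (rule card_Un_le)
  finally show ?thesis .
qed

lemma card_large_items_le_twice_max_cov_opt:
  assumes "k \<ge> 1" "d \<ge> 1"
  shows "card (large_items A n d k) \<le> 2 * max_cov_opt A n d k"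
proof -
  define L where "L = large_items A n d k"
  have L: "L \<subseteq> {..<n}" "finite L" by (auto simp: L_def large_items_def)
  obtain S where S: "S \<subseteq> {..<d}" "card S \<le> k"
    and "real (card (uncovered A L S)) \<le> real (card L) * (1 - 1 / real k) ^ k"
    using exists_columns_card_uncovered_le[OF L(2) assms(2), where A=A and k=k and t=k]
    by (auto simp: L_def large_items_def)
  then have "real (card (uncovered A L S)) \<le> real (card L) / 2"
    using mult_left_mono[OF one_minus_inverse_power_le_half[OF assms(1)], of "real (card L)"]
    by simp
  moreover have "card L \<le> card (uncovered A L S) + max_cov_opt A n d k"
    using card_le_uncovered_plus_coverage[OF L(1), where A=A and S=S]
      coverage_le_max_cov_opt[OF S, where A=A and n=n]
    by linarith
  ultimately show ?thesis unfolding L_def by linarith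
qed

theorem lemma8:
  fixes C1 :: real
  shows "\<exists>C::real. \<forall>(n::nat) (d::nat) (k::nat) (\<epsilon>::real) (A::nat \<Rightarrow> nat \<Rightarrow> real).
           k \<ge> 1 \<longrightarrow> d \<ge> 1 \<longrightarrow> 0 < \<epsilon> \<longrightarrow> \<epsilon> < 1 \<longrightarrow>
           real (max_cov_opt A n d k) \<le> C1 * real k * ln (real d) / \<epsilon>^2 \<longrightarrow>
           real (card (large_items A n d k)) \<le> C * real k * ln (real d) / \<epsilon>^2"
proof (intro exI[of _ "2 * C1"] allI impI)
  fix n d k :: nat and \<epsilon> :: real and A :: "nat \<Rightarrow> nat \<Rightarrow> real"
  assume "k \<ge> 1" "d \<ge> 1" "0 < \<epsilon>" "\<epsilon> < 1"
    and opt: "real (max_cov_opt A n d k) \<le> C1 * real k * ln (real d) / \<epsilon>^2"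
  have "real (card (large_items A n d k)) \<le> 2 * real (max_cov_opt A n d k)"
    using card_large_items_le_twice_max_cov_opt[OF \<open>k \<ge> 1\<close> \<open>d \<ge> 1\<close>, of A n] by linarith
  also have "\<dots> \<le> 2 * C1 * real k * ln (real d) / \<epsilon>^2"
    using opt by simp
  finally show "real (card (large_items A n d k)) \<le> 2 * C1 * real k * ln (real d) / \<epsilon>^2" .
qed

end
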